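(* Let $J\subset(0,\infty)$ be an open interval and let $u:J\to\mathbb{R}$ be a smooth function with $u'(\alpha)\neq 0$ for all $\alpha\in J$. The rotational surface in $(\mathbb{R}^3,\|\cdot\|)$ given by $\bar f(\alpha,v)=(\alpha\cos v,\ \alpha\sin v,\ u(\alpha))$ is minimal if and only if there are constants $c_2>0$ and $c_3\in\mathbb{R}$ and a fixed choice of sign such that $J\subset(c_2,\infty)$ and $$u(\alpha)=\pm\int_{c_2}^{\alpha}\frac{c_2^{2m-1}}{\left(\rho^{2m}-c_2^{2m}\right)^{\frac{2m-1}{2m}}}\,d\rho+c_3\qquad(\alpha\in J).$$
   Context: Fix an integer $m\ge 2$. Let $\Phi(x_1,x_2,x_3)=(x_1^2+x_2^2)^m+x_3^{2m}$ and let $\|\cdot\|$ be the norm on $\mathbb{R}^3$ whose unit sphere is $S=\{x\in\mathbb{R}^3:\Phi(x)=1\}$ (a smooth, strictly convex surface). For a surface given by a parametrization $f(s,v)$, its Birkhoff–Gauss map $\eta$ is the map into $S$ defined by requiring $\eta\in S$ and $\nabla\Phi(\eta)=\mu\, f_s\times f_v$ for some function $\mu>0$, where $\times$ is the standard cross product (so the tangent plane of $S$ at $\eta(p)$ is parallel to $T_pM$, and $d\eta_p$ is an endomorphism of $T_pM$). The Minkowski mean curvature is $H=\tfrac12\operatorname{trace}(d\eta_p)$, and the surface is minimal if $H\equiv 0$ (this condition does not depend on the orientation). *)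

theory Defs
  imports "HOL-Analysis.Analysis" "HOL-Analysis.Cross3"
begin

text \<open>The function Phi whose level set Phi = 1 is the unit sphere S of the norm.\<close>
definition Phi :: "nat \<Rightarrow> real^3 \<Rightarrow> real" where
  "Phi m x = ((x$1)^2 + (x$2)^2)^m + (x$3)^(2*m)"

definition partial_s :: "(real \<Rightarrow> real \<Rightarrow> real^3) \<Rightarrow> real \<Rightarrow> real \<Rightarrow> real^3" where
  "partial_s f s v = vector_derivative (\<lambda>t. f t v) (at s)"

definition partial_v :: "(real \<Rightarrow> real \<Rightarrow> real^3) \<Rightarrow> real \<Rightarrow> real \<Rightarrow> real^3" where
  "partial_v f s v = vector_derivative (\<lambda>t. f s t) (at v)"

definition BG_map :: "nat \<Rightarrow> (real \<Rightarrow> real \<Rightarrow> real^3) \<Rightarrow> real \<Rightarrow> real \<Rightarrow> real^3" where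
  "BG_map m f s v = (THE e. Phi m e = 1 \<and>
      (\<exists>\<mu>>0. GDERIV (Phi m) e :> (\<mu> *\<^sub>R cross3 (partial_s f s v) (partial_v f s v))))"

text \<open>Minkowski mean curvature H = trace(d eta)/2, the trace computed in the basis f_s, f_v
  of the tangent plane: d eta(f_s) = eta_s = a f_s + b f_v, d eta(f_v) = eta_v = c f_s + d f_v.\<close>
definition mink_mean_curv :: "nat \<Rightarrow> (real \<Rightarrow> real \<Rightarrow> real^3) \<Rightarrow> real \<Rightarrow> real \<Rightarrow> real" where
  "mink_mean_curv m f s v =
     (THE t. \<exists>a b c d.
        partial_s (BG_map m f) s v = a *\<^sub>R partial_s f s v + b *\<^sub>R partial_v f s v \<and>
        partial_v (BG_map m f) s v = c *\<^sub>R partial_s f s v + d *\<^sub>R partial_v f s v \<and>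
        t = a + d) / 2"

definition minimal_on :: "nat \<Rightarrow> (real \<Rightarrow> real \<Rightarrow> real^3) \<Rightarrow> (real \<times> real) set \<Rightarrow> bool" where
  "minimal_on m f D = (\<forall>(s,v)\<in>D.
      (\<lambda>t. BG_map m f t v) differentiable (at s) \<and>
      (\<lambda>t. BG_map m f s t) differentiable (at v) \<and>
      mink_mean_curv m f s v = 0)"

end

theory Submission
  imports Defs
begin

(* The tangent plane at (alpha, v) has normal f_alpha x f_v = alpha (-u' cos v, -u' sin v, 1), so the
   Birkhoff-Gauss map is the point eta = (-r cos v, -r sin v, z) of S at which grad Phi points in
   this direction. Here r and z depend only on the slope p = u'(alpha) and are characterised by
   z > 0, r^(2m) + z^(2m) = 1 and r^(2m-1) = p z^(2m-1). Differentiating these relations gives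
   z' = -p r', hence d eta (f_alpha) = -(r o u')' f_alpha and d eta (f_v) = -(r / alpha) f_v, so
   2H = -(alpha r(u'(alpha)))' / alpha. Minimality thus means alpha r(u'(alpha)) = +-c is constant,
   with c > 0 because u' never vanishes, and solving for u' gives
   u' = +-c^(2m-1) / (alpha^(2m) - c^(2m))^((2m-1)/(2m)) with c < alpha. The singularity of this
   integrand at alpha = c is of order (alpha - c)^(-(2m-1)/(2m)), hence integrable, and integrating
   gives the formula. *)

lemma vector3_has_vector_derivative:
  assumes "(a has_real_derivative a') (at t)" "(b has_real_derivative b') (at t)"
    "(c has_real_derivative c') (at t)"
  shows "((\<lambda>t. vector [a t, b t, c t] :: real^3) has_vector_derivative vector [a', b', c']) (at t)"
proof -
  have decomp: "(vector [x, y, z] :: real^3) = x *\<^sub>R axis 1 1 + y *\<^sub>R axis 2 1 + z *\<^sub>R axis 3 1"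
    for x y z :: real
    by (simp add: vec_eq_iff forall_3 axis_def)
  show ?thesis
    unfolding decomp by (rule derivative_eq_intros assms refl | simp)+
qed

lemma gderiv_unique:
  assumes "GDERIV f x :> g" "GDERIV f x :> h"
  shows "g = h"
proof -
  have "(\<lambda>y. y \<bullet> g) = (\<lambda>y. y \<bullet> h)"
    using has_derivative_unique assms unfolding gderiv_def by blast
  then have "(g - h) \<bullet> g = (g - h) \<bullet> h" by metis
  then have "(g - h) \<bullet> (g - h) = 0" by (simp add: inner_diff_right)
  then show ?thesis by simp
qed

lemma Phi_Suc_has_gradient:
  "GDERIV (Phi (Suc k)) e :> (2 * (real k + 1)) *\<^sub>R
     vector [((e$1)\<^sup>2 + (e$2)\<^sup>2) ^ k * e$1, ((e$1)\<^sup>2 + (e$2)\<^sup>2) ^ k * e$2, (e$3) ^ (2*k+1)]"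
  unfolding gderiv_def Phi_def
  by (rule derivative_eq_intros bounded_linear.has_derivative[OF bounded_linear_vec_nth]
      has_derivative_ident refl)+
    (simp add: inner_vec_def sum_3 algebra_simps)

text \<open>With \<open>m = Suc k\<close>, the point of the unit sphere \<open>Phi m = 1\<close> whose normal is parallel to
  \<open>(-p cos v, -p sin v, 1)\<close> is \<open>(-bg_radius k p cos v, -bg_radius k p sin v, bg_height k p)\<close>
  (lemma \<open>Phi_Suc_point_with_normal\<close>). The odd root \<open>root (2*k+1)\<close> keeps the sign of \<open>p\<close>.\<close>

definition bg_height :: "nat \<Rightarrow> real \<Rightarrow> real" where
  "bg_height k p = (1 + root (2*k+1) p ^ (2*k+2)) powr (- 1 / real (2*k+2))"

definition bg_radius :: "nat \<Rightarrow> real \<Rightarrow> real" where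
  "bg_radius k p = root (2*k+1) p * bg_height k p"

lemma one_plus_root_power_pos: "1 + root (2*k+1) p ^ (2*k+2) > 0"
  using zero_le_even_power[of "2*k+2" "root (2*k+1) p"] by simp

lemma bg_height_pos: "bg_height k p > 0"
  using one_plus_root_power_pos[of k p] by (simp add: bg_height_def)

lemma bg_height_power: "bg_height k p ^ (2*k+2) * (1 + root (2*k+1) p ^ (2*k+2)) = 1"
  using one_plus_root_power_pos[of k p]
  unfolding bg_height_def powr_power[OF one_plus_root_power_pos[THEN less_imp_neq, symmetric]]
  by (simp add: powr_minus)

lemma bg_radius_height_power_sum: "bg_radius k p ^ (2*k+2) + bg_height k p ^ (2*k+2) = 1"
  using bg_height_power[of k p] by (simp add: bg_radius_def algebra_simps)

lemma bg_radius_power_odd: "bg_radius k p ^ (2*k+1) = p * bg_height k p ^ (2*k+1)"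
proof -
  have "root (2*k+1) p ^ (2*k+1) = p" by (rule odd_real_root_pow) simp
  then show ?thesis by (simp only: bg_radius_def power_mult_distrib)
qed

lemma bg_radius_height_unique:
  assumes z: "z > 0" and odd: "r ^ (2*k+1) = p * z ^ (2*k+1)"
    and sum: "r ^ (2*k+2) + z ^ (2*k+2) = 1"
  shows "r = bg_radius k p" and "z = bg_height k p"
proof -
  have "(r / z) ^ (2*k+1) = p"
    using z unfolding power_divide odd by simp
  then have q: "root (2*k+1) p = r / z"
    using odd_real_root_power_cancel[of "2*k+1" "r / z"] by simp
  have "z ^ (2*k+2) * (1 + root (2*k+1) p ^ (2*k+2)) = 1"
    using sum z unfolding q by (simp add: field_simps)
  then have "z ^ (2*k+2) = bg_height k p ^ (2*k+2)"
    using bg_height_power[of k p] one_plus_root_power_pos[of k p]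
    by (metis mult_right_cancel less_irrefl)
  then show zh: "z = bg_height k p"
    by (rule power_eq_imp_eq_base) (use z bg_height_pos[of k p] in auto)
  show "r = bg_radius k p"
    using z q unfolding bg_radius_def zh[symmetric] by simp
qed

lemma Phi_Suc_normal_point:
  fixes k :: nat and \<alpha> p v :: real
  assumes \<alpha>: "\<alpha> > 0"
  defines "e \<equiv> vector [- bg_radius k p * cos v, - bg_radius k p * sin v, bg_height k p] :: real^3"
  shows "Phi (Suc k) e = 1"
    and "\<exists>\<mu>>0. GDERIV (Phi (Suc k)) e :> \<mu> *\<^sub>R vector [- \<alpha> * p * cos v, - \<alpha> * p * sin v, \<alpha>]"
proof -
  let ?\<rho> = "bg_radius k p" and ?z = "bg_height k p"
  have R: "(e$1)\<^sup>2 + (e$2)\<^sup>2 = ?\<rho>\<^sup>2"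
    by (simp add: e_def power_mult_distrib flip: distrib_left)
  have "Phi (Suc k) e = ?\<rho> ^ (2*k+2) + ?z ^ (2*k+2)"
    unfolding Phi_def R power_mult[symmetric] by (simp add: e_def)
  then show "Phi (Suc k) e = 1" unfolding bg_radius_height_power_sum .
  let ?\<mu> = "2 * (real k + 1) * ?z ^ (2*k+1) / \<alpha>"
  have "(?\<rho>\<^sup>2) ^ k * ?\<rho> = p * ?z ^ (2*k+1)"
    using bg_radius_power_odd[of k p] by (simp only: power_add power_mult power_one_right)
  then have "(vector [(?\<rho>\<^sup>2) ^ k * (e$1), (?\<rho>\<^sup>2) ^ k * (e$2), (e$3) ^ (2*k+1)] :: real^3)
      = (?z ^ (2*k+1) / \<alpha>) *\<^sub>R vector [- \<alpha> * p * cos v, - \<alpha> * p * sin v, \<alpha>]"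
    using \<alpha> by (simp add: e_def vec_eq_iff forall_3 field_simps)
  then have "GDERIV (Phi (Suc k)) e :> ?\<mu> *\<^sub>R vector [- \<alpha> * p * cos v, - \<alpha> * p * sin v, \<alpha>]"
    using Phi_Suc_has_gradient[of k e] unfolding R by simp
  moreover have "?\<mu> > 0" using \<alpha> bg_height_pos[of k p] by simp
  ultimately show "\<exists>\<mu>>0. GDERIV (Phi (Suc k)) e :> \<mu> *\<^sub>R vector [- \<alpha> * p * cos v, - \<alpha> * p * sin v, \<alpha>]"
    by blast
qed

lemma Phi_Suc_normal_point_unique:
  assumes \<alpha>: "\<alpha> > 0" and \<mu>: "\<mu> > 0" and on_sphere: "Phi (Suc k) e = 1"
    and grad: "GDERIV (Phi (Suc k)) e :> \<mu> *\<^sub>R vector [- \<alpha> * p * cos v, - \<alpha> * p * sin v, \<alpha>]"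
  shows "e = vector [- bg_radius k p * cos v, - bg_radius k p * sin v, bg_height k p]"
proof -
  define R where "R = (e$1)\<^sup>2 + (e$2)\<^sup>2"
  define K where "K = \<mu> * \<alpha> / (2 * (real k + 1))"
  have "(2 * (real k + 1)) *\<^sub>R (vector [R ^ k * e$1, R ^ k * e$2, (e$3) ^ (2*k+1)] :: real^3)
      = \<mu> *\<^sub>R vector [- \<alpha> * p * cos v, - \<alpha> * p * sin v, \<alpha>]"
    using gderiv_unique[OF Phi_Suc_has_gradient grad] by (simp add: R_def)
  then have e1: "R ^ k * e$1 = - K * p * cos v" and e2: "R ^ k * e$2 = - K * p * sin v"
    and e3: "(e$3) ^ (2*k+1) = K"
    by (auto simp: vec_eq_iff forall_3 K_def field_simps)
  have "K > 0" using \<mu> \<alpha> by (simp add: K_def)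
  then have e3_pos: "e$3 > 0" using e3 zero_less_power_eq[of "e$3" "2*k+1"] by simp
  define \<rho> where "\<rho> = root (2*k+1) (p * K)"
  have \<rho>_odd: "\<rho> ^ (2*k+1) = p * K"
    unfolding \<rho>_def by (rule odd_real_root_pow) simp
  have "R ^ (2*k+1) = (R ^ k * e$1)\<^sup>2 + (R ^ k * e$2)\<^sup>2"
    by (simp add: R_def algebra_simps flip: power_mult)
  also have "\<dots> = (p * K)\<^sup>2"
    unfolding e1 e2 by (simp add: power_mult_distrib flip: distrib_left)
  also have "\<dots> = (\<rho>\<^sup>2) ^ (2*k+1)"
    unfolding \<rho>_odd[symmetric] by (simp only: power_mult[symmetric] mult.commute)
  finally have R_\<rho>: "R = \<rho>\<^sup>2"
    by (rule power_eq_imp_eq_base) (auto simp: R_def)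
  have "\<rho> ^ (2*k+2) + (e$3) ^ (2*k+2) = 1"
    using on_sphere unfolding Phi_def R_def[symmetric] R_\<rho> power_mult[symmetric] by simp
  from bg_radius_height_unique[OF e3_pos \<rho>_odd[folded e3] this]
  have \<rho>_eq: "\<rho> = bg_radius k p" and e3_eq: "e$3 = bg_height k p" by simp_all
  have "e$1 = - \<rho> * cos v \<and> e$2 = - \<rho> * sin v"
  proof (cases "\<rho> = 0")
    case True
    then show ?thesis using R_\<rho> by (simp add: R_def)
  next
    case False
    have cancel: "e$i = - \<rho> * w" if "R ^ k * e$i = - K * p * w" for i and w
    proof -
      have "\<rho> ^ (2*k) * e$i = \<rho> ^ (2*k) * (- \<rho> * w)"
        using that \<rho>_odd unfolding R_\<rho> by (simp add: algebra_simps flip: power_mult)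
      then show ?thesis using False by (metis mult_left_cancel power_not_zero)
    qed
    show ?thesis using cancel[OF e1] cancel[OF e2] by simp
  qed
  then show ?thesis using \<rho>_eq e3_eq by (simp add: vec_eq_iff forall_3)
qed

lemma Phi_Suc_point_with_normal:
  assumes "\<alpha> > 0"
  shows "(THE e. Phi (Suc k) e = 1 \<and>
            (\<exists>\<mu>>0. GDERIV (Phi (Suc k)) e :> \<mu> *\<^sub>R vector [- \<alpha> * p * cos v, - \<alpha> * p * sin v, \<alpha>]))
       = vector [- bg_radius k p * cos v, - bg_radius k p * sin v, bg_height k p]"
  using Phi_Suc_normal_point[OF assms] Phi_Suc_normal_point_unique[OF assms]
  by (intro the_equality) blast+

lemma bg_radius_height_differentiable:
  assumes "p \<noteq> 0"
  shows "bg_height k differentiable (at p)" and "bg_radius k differentiable (at p)"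
proof -
  have "DERIV (root (2*k+1)) p :> inverse (real (2*k+1) * root (2*k+1) p ^ (2*k))"
    by (rule DERIV_real_root_generic) (use assms in auto)
  then obtain q' where q': "DERIV (root (2*k+1)) p :> q'" by blast
  have "DERIV (\<lambda>p. 1 + root (2*k+1) p ^ (2*k+2)) p
      :> 0 + real (2*k+2) * (q' * root (2*k+1) p ^ (2*k+2 - Suc 0))"
    by (intro derivative_intros q')
  from DERIV_fun_powr[OF this, of "- 1 / real (2*k+2)"]
  show height: "bg_height k differentiable (at p)"
    unfolding bg_height_def[abs_def] real_differentiable_def
    using one_plus_root_power_pos[of k p] by fastforce
  show "bg_radius k differentiable (at p)"
    unfolding bg_radius_def[abs_def] using q' height real_differentiable_def
    by (blast intro: differentiable_mult)
qed

lemma deriv_bg_height: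
  assumes "p \<noteq> 0"
  shows "deriv (bg_height k) p = - p * deriv (bg_radius k) p"
proof -
  let ?r = "deriv (bg_radius k) p" and ?z = "deriv (bg_height k) p"
  have r: "DERIV (bg_radius k) p :> ?r" and z: "DERIV (bg_height k) p :> ?z"
    using bg_radius_height_differentiable[OF assms]
    by (simp_all add: DERIV_deriv_iff_real_differentiable)
  have "DERIV (\<lambda>p. bg_radius k p ^ (2*k+2) + bg_height k p ^ (2*k+2)) p
      :> real (2*k+2) * (?r * bg_radius k p ^ (2*k+2 - Suc 0))
         + real (2*k+2) * (?z * bg_height k p ^ (2*k+2 - Suc 0))"
    by (intro derivative_intros r z)
  moreover have "DERIV (\<lambda>p. bg_radius k p ^ (2*k+2) + bg_height k p ^ (2*k+2)) p :> 0"
    unfolding bg_radius_height_power_sum by (rule DERIV_const)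
  ultimately have "real (2*k+2) * (?r * bg_radius k p ^ (2*k+1) + ?z * bg_height k p ^ (2*k+1)) = 0"
    by (simp add: distrib_left DERIV_unique)
  then have "?r * bg_radius k p ^ (2*k+1) + ?z * bg_height k p ^ (2*k+1) = 0"
    by (simp del: of_nat_add of_nat_mult)
  then have "bg_height k p ^ (2*k+1) * (?z + p * ?r) = 0"
    unfolding bg_radius_power_odd by (simp add: algebra_simps)
  then show ?thesis using bg_height_pos[of k p] by simp
qed

lemma cross3_coefficients_unique:
  assumes "cross3 x y \<noteq> 0" and "a *\<^sub>R x + b *\<^sub>R y = a' *\<^sub>R x + b' *\<^sub>R y"
  shows "a = a'" and "b = b'"
proof -
  have "cross3 (a *\<^sub>R x + b *\<^sub>R y) y = cross3 (a' *\<^sub>R x + b' *\<^sub>R y) y"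
    and "cross3 x (a *\<^sub>R x + b *\<^sub>R y) = cross3 x (a' *\<^sub>R x + b' *\<^sub>R y)"
    using assms(2) by simp_all
  then have "a *\<^sub>R cross3 x y = a' *\<^sub>R cross3 x y" and "b *\<^sub>R cross3 x y = b' *\<^sub>R cross3 x y"
    by (simp_all add: cross_add_left cross_add_right cross_mult_left cross_mult_right)
  then show "a = a'" and "b = b'"
    using assms(1) by simp_all
qed

lemma mink_mean_curv_eqI:
  assumes "cross3 (partial_s f s v) (partial_v f s v) \<noteq> 0"
    and "partial_s (BG_map m f) s v = a *\<^sub>R partial_s f s v + b *\<^sub>R partial_v f s v"
    and "partial_v (BG_map m f) s v = c *\<^sub>R partial_s f s v + d *\<^sub>R partial_v f s v"
  shows "mink_mean_curv m f s v = (a + d) / 2"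
proof -
  have "(THE t. \<exists>a b c d.
          partial_s (BG_map m f) s v = a *\<^sub>R partial_s f s v + b *\<^sub>R partial_v f s v \<and>
          partial_v (BG_map m f) s v = c *\<^sub>R partial_s f s v + d *\<^sub>R partial_v f s v \<and>
          t = a + d) = a + d"
    using assms cross3_coefficients_unique[OF assms(1)] by (rule_tac the_equality) metis+
  then show ?thesis unfolding mink_mean_curv_def by simp
qed

definition rotation_surface :: "(real \<Rightarrow> real) \<Rightarrow> real \<Rightarrow> real \<Rightarrow> real^3" where
  "rotation_surface u = (\<lambda>s v. vector [s * cos v, s * sin v, u s])"

lemma partial_s_rotation_surface:
  assumes "u differentiable (at s)"
  shows "partial_s (rotation_surface u) s v = vector [cos v, sin v, deriv u s]"
  unfolding partial_s_def rotation_surface_def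
  by (rule vector_derivative_at, rule vector3_has_vector_derivative)
    (auto intro!: derivative_eq_intros simp: DERIV_deriv_iff_real_differentiable assms)

lemma partial_v_rotation_surface:
  "partial_v (rotation_surface u) s v = vector [- s * sin v, s * cos v, 0]"
  unfolding partial_v_def rotation_surface_def
  by (rule vector_derivative_at, rule vector3_has_vector_derivative)
    (auto intro!: derivative_eq_intros)

lemma cross3_partials_rotation_surface:
  "cross3 (vector [cos v, sin v, p]) (vector [- s * sin v, s * cos v, 0])
     = vector [- s * p * cos v, - s * p * sin v, s]"
proof -
  have "s * (cos v * cos v) + s * (sin v * sin v) = s"
    by (simp flip: distrib_left)
  then show ?thesis by (simp add: cross3_def vec_eq_iff forall_3 algebra_simps)
qed

lemma BG_map_rotation_surface:
  assumes "s > 0" and "u differentiable (at s)"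
  shows "BG_map (Suc k) (rotation_surface u) s v = vector
     [- bg_radius k (deriv u s) * cos v, - bg_radius k (deriv u s) * sin v, bg_height k (deriv u s)]"
  unfolding BG_map_def partial_s_rotation_surface[OF assms(2)] partial_v_rotation_surface
    cross3_partials_rotation_surface
  by (rule Phi_Suc_point_with_normal[OF assms(1)])

lemma bg_radius_height_comp_derivatives:
  fixes p :: "real \<Rightarrow> real"
  assumes p: "p differentiable (at s)" "p s \<noteq> 0"
  shows "(\<lambda>t. bg_radius k (p t)) differentiable (at s)"
    and "((\<lambda>t. bg_height k (p t)) has_real_derivative - p s * deriv (\<lambda>t. bg_radius k (p t)) s) (at s)"
proof -
  obtain p' where p': "DERIV p s :> p'"
    using p(1) real_differentiable_def by blast
  have radius: "DERIV (\<lambda>t. bg_radius k (p t)) s :> deriv (bg_radius k) (p s) * p'"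
    using bg_radius_height_differentiable(2)[OF p(2)]
    by (intro DERIV_chain2[OF _ p']) (simp add: DERIV_deriv_iff_real_differentiable)
  then show "(\<lambda>t. bg_radius k (p t)) differentiable (at s)"
    using real_differentiable_def by blast
  have "DERIV (\<lambda>t. bg_height k (p t)) s :> deriv (bg_height k) (p s) * p'"
    using bg_radius_height_differentiable(1)[OF p(2)]
    by (intro DERIV_chain2[OF _ p']) (simp add: DERIV_deriv_iff_real_differentiable)
  then show "DERIV (\<lambda>t. bg_height k (p t)) s :> - p s * deriv (\<lambda>t. bg_radius k (p t)) s"
    using radius unfolding deriv_bg_height[OF p(2)] by (simp add: DERIV_imp_deriv mult.assoc)
qed

lemma BG_map_rotation_surface_has_derivatives:
  fixes k :: nat and u :: "real \<Rightarrow> real" and J :: "real set"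
  defines "\<rho> \<equiv> \<lambda>t. bg_radius k (deriv u t)"
  assumes J: "open J" "J \<subseteq> {0<..}" "s \<in> J" and u: "\<forall>t\<in>J. u differentiable (at t)"
    and u': "deriv u differentiable (at s)" "deriv u s \<noteq> 0"
  shows "\<rho> differentiable (at s)"
    and "((\<lambda>t. BG_map (Suc k) (rotation_surface u) t v) has_vector_derivative
           (- deriv \<rho> s) *\<^sub>R vector [cos v, sin v, deriv u s]) (at s)"
    and "((\<lambda>w. BG_map (Suc k) (rotation_surface u) s w) has_vector_derivative
           (- \<rho> s / s) *\<^sub>R vector [- s * sin v, s * cos v, 0]) (at v)"
proof -
  define \<zeta> where "\<zeta> = (\<lambda>t. bg_height k (deriv u t))"
  note comp = bg_radius_height_comp_derivatives[OF u', of k]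
  show "\<rho> differentiable (at s)" unfolding \<rho>_def by (rule comp(1))
  then have \<rho>': "DERIV \<rho> s :> deriv \<rho> s" by (simp add: DERIV_deriv_iff_real_differentiable)
  have \<zeta>': "DERIV \<zeta> s :> - deriv u s * deriv \<rho> s"
    unfolding \<zeta>_def \<rho>_def by (rule comp(2))
  have BG: "BG_map (Suc k) (rotation_surface u) t w = vector [- \<rho> t * cos w, - \<rho> t * sin w, \<zeta> t]"
    if "t \<in> J" for t w
    using BG_map_rotation_surface[of t u k w] that J u unfolding \<rho>_def \<zeta>_def by auto
  have "((\<lambda>t. vector [- \<rho> t * cos v, - \<rho> t * sin v, \<zeta> t] :: real^3) has_vector_derivative
      vector [- deriv \<rho> s * cos v, - deriv \<rho> s * sin v, - deriv u s * deriv \<rho> s]) (at s)"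
    by (intro vector3_has_vector_derivative derivative_eq_intros \<rho>' \<zeta>') (auto intro: \<rho>')
  moreover have "vector [- deriv \<rho> s * cos v, - deriv \<rho> s * sin v, - deriv u s * deriv \<rho> s]
      = (- deriv \<rho> s) *\<^sub>R (vector [cos v, sin v, deriv u s] :: real^3)"
    by (simp add: vec_eq_iff forall_3)
  ultimately have "((\<lambda>t. vector [- \<rho> t * cos v, - \<rho> t * sin v, \<zeta> t] :: real^3)
      has_vector_derivative (- deriv \<rho> s) *\<^sub>R vector [cos v, sin v, deriv u s]) (at s)"
    by simp
  then show "((\<lambda>t. BG_map (Suc k) (rotation_surface u) t v) has_vector_derivative
      (- deriv \<rho> s) *\<^sub>R vector [cos v, sin v, deriv u s]) (at s)"
    by (rule has_vector_derivative_transform_within_open[OF _ J(1,3)]) (simp add: BG)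
  have "((\<lambda>w. vector [- \<rho> s * cos w, - \<rho> s * sin w, \<zeta> s] :: real^3) has_vector_derivative
      vector [\<rho> s * sin v, - \<rho> s * cos v, 0]) (at v)"
    by (intro vector3_has_vector_derivative derivative_eq_intros) auto
  moreover have "vector [\<rho> s * sin v, - \<rho> s * cos v, 0]
      = (- \<rho> s / s) *\<^sub>R (vector [- s * sin v, s * cos v, 0] :: real^3)"
    using J by (auto simp: vec_eq_iff forall_3)
  ultimately show "((\<lambda>w. BG_map (Suc k) (rotation_surface u) s w) has_vector_derivative
      (- \<rho> s / s) *\<^sub>R vector [- s * sin v, s * cos v, 0]) (at v)"
    using BG[OF J(3)] by simp
qed

lemma mink_mean_curv_rotation_surface:
  fixes k :: nat and u :: "real \<Rightarrow> real" and J :: "real set"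
  defines "\<rho> \<equiv> \<lambda>t. bg_radius k (deriv u t)"
  assumes J: "open J" "J \<subseteq> {0<..}" "s \<in> J" and u: "\<forall>t\<in>J. u differentiable (at t)"
    and u': "deriv u differentiable (at s)" "deriv u s \<noteq> 0"
  shows "mink_mean_curv (Suc k) (rotation_surface u) s v = - deriv (\<lambda>t. t * \<rho> t) s / (2 * s)"
proof -
  note derivs = BG_map_rotation_surface_has_derivatives[OF J u u', of k, folded \<rho>_def]
  have s: "s > 0" and us: "u differentiable (at s)" using J u by auto
  have "mink_mean_curv (Suc k) (rotation_surface u) s v = (- deriv \<rho> s + - \<rho> s / s) / 2"
  proof (rule mink_mean_curv_eqI)
    show "cross3 (partial_s (rotation_surface u) s v) (partial_v (rotation_surface u) s v) \<noteq> 0"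
      using s unfolding partial_s_rotation_surface[OF us] partial_v_rotation_surface
        cross3_partials_rotation_surface by (simp add: vec_eq_iff forall_3)
    show "partial_s (BG_map (Suc k) (rotation_surface u)) s v
        = (- deriv \<rho> s) *\<^sub>R partial_s (rotation_surface u) s v + 0 *\<^sub>R partial_v (rotation_surface u) s v"
      unfolding partial_s_rotation_surface[OF us] unfolding partial_s_def
      using vector_derivative_at[OF derivs(2)] by simp
    show "partial_v (BG_map (Suc k) (rotation_surface u)) s v
        = 0 *\<^sub>R partial_s (rotation_surface u) s v + (- \<rho> s / s) *\<^sub>R partial_v (rotation_surface u) s v"
      unfolding partial_v_rotation_surface unfolding partial_v_def
      using vector_derivative_at[OF derivs(3)] by (simp add: \<rho>_def)
  qed
  moreover have "deriv (\<lambda>t. t * \<rho> t) s = \<rho> s + s * deriv \<rho> s"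
    using derivs(1) by (auto intro!: DERIV_imp_deriv derivative_eq_intros
      simp: DERIV_deriv_iff_real_differentiable)
  ultimately show ?thesis using s by (simp add: field_simps)
qed

lemma deriv_eq_iff_eq_antiderivative_plus_const:
  fixes u F f :: "real \<Rightarrow> real"
  assumes J: "open J" "is_interval J"
    and F: "\<And>x. x \<in> J \<Longrightarrow> (F has_real_derivative f x) (at x)"
    and u: "\<And>x. x \<in> J \<Longrightarrow> u differentiable (at x)"
  shows "(\<forall>x\<in>J. deriv u x = f x) \<longleftrightarrow> (\<exists>c. \<forall>x\<in>J. u x = F x + c)"
proof
  assume u': "\<forall>x\<in>J. deriv u x = f x"
  have "\<exists>c. \<forall>x\<in>J. u x - F x = c"
  proof (rule has_field_derivative_zero_constant)
    show "convex J" using J(2) by (rule is_interval_convex)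
    fix x assume x: "x \<in> J"
    have "((\<lambda>x. u x - F x) has_real_derivative deriv u x - f x) (at x)"
      using u[OF x] F[OF x] by (intro derivative_intros) (simp_all add: DERIV_deriv_iff_real_differentiable)
    then show "((\<lambda>x. u x - F x) has_real_derivative 0) (at x within J)"
      using u' x by (simp add: has_field_derivative_at_within)
  qed
  then show "\<exists>c. \<forall>x\<in>J. u x = F x + c" by (metis add.commute diff_eq_eq)
next
  assume "\<exists>c. \<forall>x\<in>J. u x = F x + c"
  then obtain c where c: "\<And>x. x \<in> J \<Longrightarrow> u x = F x + c" by blast
  show "\<forall>x\<in>J. deriv u x = f x"
  proof
    fix x assume x: "x \<in> J"
    have "((\<lambda>x. F x + c) has_real_derivative f x) (at x)"
      using F[OF x] by (auto intro!: derivative_eq_intros)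
    then have "(u has_real_derivative f x) (at x)"
      by (rule has_field_derivative_transform_within_open[OF _ J(1) x]) (simp add: c)
    then show "deriv u x = f x" by (rule DERIV_imp_deriv)
  qed
qed

lemma minimal_on_rotation_surface_iff:
  assumes J: "open J" "is_interval J" "J \<subseteq> {0<..}"
    and u: "\<forall>t\<in>J. u differentiable (at t)" "\<forall>t\<in>J. deriv u differentiable (at t)"
      "\<forall>t\<in>J. deriv u t \<noteq> 0"
  shows "minimal_on (Suc k) (rotation_surface u) (J \<times> UNIV)
    \<longleftrightarrow> (\<exists>C. \<forall>s\<in>J. s * bg_radius k (deriv u s) = C)"
proof -
  define \<rho> where "\<rho> = (\<lambda>t. bg_radius k (deriv u t))"
  note derivs = BG_map_rotation_surface_has_derivatives[OF J(1,3) _ u(1), of _ k, folded \<rho>_def]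
  have "minimal_on (Suc k) (rotation_surface u) (J \<times> UNIV) \<longleftrightarrow> (\<forall>s\<in>J. deriv (\<lambda>t. t * \<rho> t) s = 0)"
  proof -
    have "(\<lambda>t. BG_map (Suc k) (rotation_surface u) t v) differentiable (at s)
        \<and> (\<lambda>w. BG_map (Suc k) (rotation_surface u) s w) differentiable (at v)"
      if s: "s \<in> J" for s v
      using derivs(2,3)[OF s, of v] u(2,3) s by (blast intro: differentiableI_vector)
    moreover have "mink_mean_curv (Suc k) (rotation_surface u) s v = 0
        \<longleftrightarrow> deriv (\<lambda>t. t * \<rho> t) s = 0" if s: "s \<in> J" for s v
      using mink_mean_curv_rotation_surface[OF J(1,3) s u(1), of k v, folded \<rho>_def] u(2,3) s J(3)
      by (auto simp: \<rho>_def)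
    ultimately show ?thesis unfolding minimal_on_def by auto
  qed
  also have "\<dots> \<longleftrightarrow> (\<exists>C. \<forall>s\<in>J. s * \<rho> s = 0 + C)"
  proof (rule deriv_eq_iff_eq_antiderivative_plus_const[OF J(1,2) DERIV_const])
    show "(\<lambda>t. t * \<rho> t) differentiable (at s)" if s: "s \<in> J" for s
      using derivs(1)[OF s] u(2,3) s by (intro differentiable_mult differentiable_ident) auto
  qed
  finally show ?thesis by (simp add: \<rho>_def)
qed

lemma bg_radius_minus: "bg_radius k (- p) = - bg_radius k p"
proof -
  have "root (2*k+1) (- p) ^ (2*k+2) = root (2*k+1) p ^ (2*k+2)"
    by (simp add: real_root_minus)
  then show ?thesis by (simp add: bg_radius_def bg_height_def real_root_minus)
qed

lemma bg_radius_eq_0_iff: "bg_radius k p = 0 \<longleftrightarrow> p = 0"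
  using bg_radius_power_odd[of k p] bg_height_pos[of k p] by (auto simp: bg_radius_def)

lemma bg_radius_inj:
  assumes "bg_radius k p = bg_radius k p'"
  shows "p = p'"
proof -
  have "bg_height k p ^ (2*k+2) = bg_height k p' ^ (2*k+2)"
    using bg_radius_height_power_sum[of k p] bg_radius_height_power_sum[of k p'] assms by simp
  then have "bg_height k p = bg_height k p'"
    by (rule power_eq_imp_eq_base) (simp_all add: less_imp_le bg_height_pos)
  then show ?thesis
    using bg_radius_power_odd[of k p] bg_radius_power_odd[of k p'] assms bg_height_pos[of k p] by simp
qed

definition catenoid_slope :: "nat \<Rightarrow> real \<Rightarrow> real \<Rightarrow> real" where
  "catenoid_slope k c s = c ^ (2*k+1) / (s ^ (2*k+2) - c ^ (2*k+2)) powr (real (2*k+1) / real (2*k+2))"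

lemma radius_catenoid_slope:
  assumes "0 < c" "c < s"
  shows "s * bg_radius k (catenoid_slope k c s) = c"
proof -
  define D where "D = s ^ (2*k+2) - c ^ (2*k+2)"
  define w where "w = D powr (1 / real (2*k+2))"
  have D: "D > 0"
    using assms power_strict_mono[of c s "2*k+2"] by (simp add: D_def)
  then have w: "w > 0" by (simp add: w_def)
  have w_even: "w ^ (2*k+2) = D"
    unfolding w_def powr_power[OF D[THEN less_imp_neq, symmetric]] using D by simp
  have "D powr (real (2*k+1) / real (2*k+2)) = w ^ (2*k+1)"
    unfolding w_def powr_power[OF D[THEN less_imp_neq, symmetric]] by simp
  then have slope: "catenoid_slope k c s = c ^ (2*k+1) / w ^ (2*k+1)"
    by (simp add: catenoid_slope_def D_def)
  have "c / s = bg_radius k (catenoid_slope k c s)"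
  proof (rule bg_radius_height_unique)
    show "w / s > 0" using w assms by simp
    show "(c / s) ^ (2*k+1) = catenoid_slope k c s * (w / s) ^ (2*k+1)"
      using w by (simp add: slope power_divide)
    show "(c / s) ^ (2*k+2) + (w / s) ^ (2*k+2) = 1"
      unfolding power_divide w_even D_def using assms by (simp add: field_simps)
  qed
  then show ?thesis using assms by (simp add: field_simps)
qed

lemma times_bg_radius_eq_iff:
  assumes "s > 0" "c > 0"
  shows "s * bg_radius k p = c \<longleftrightarrow> c < s \<and> p = catenoid_slope k c s"
proof
  assume c: "s * bg_radius k p = c"
  have "bg_radius k p ^ (2*k+2) < 1"
    using bg_radius_height_power_sum[of k p] zero_less_power[OF bg_height_pos, of k p "2*k+2"]
    by linarith
  moreover have "bg_radius k p = c / s" using c assms by (simp add: field_simps)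
  ultimately have "(c / s) ^ (2*k+2) < 1 ^ (2*k+2)" by simp
  then have "c / s < 1"
    by (rule power_less_imp_less_base) simp
  then have "c < s" using assms by simp
  moreover have "bg_radius k p = bg_radius k (catenoid_slope k c s)"
    using radius_catenoid_slope[OF assms(2) \<open>c < s\<close>, of k] c assms(1)
    by (metis mult_left_cancel less_irrefl)
  ultimately show "c < s \<and> p = catenoid_slope k c s" by (simp add: bg_radius_inj)
next
  assume "c < s \<and> p = catenoid_slope k c s"
  then show "s * bg_radius k p = c" using radius_catenoid_slope[OF assms(2)] by blast
qed

lemma const_radius_iff_catenoid_slope:
  fixes p :: "real \<Rightarrow> real"
  assumes J: "J \<noteq> {}" "J \<subseteq> {0<..}" and p: "\<forall>s\<in>J. p s \<noteq> 0"
  shows "(\<exists>C. \<forall>s\<in>J. s * bg_radius k (p s) = C)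
    \<longleftrightarrow> (\<exists>c>0. \<exists>\<sigma>\<in>{1, -1::real}. J \<subseteq> {c<..} \<and> (\<forall>s\<in>J. p s = \<sigma> * catenoid_slope k c s))"
proof -
  have signed: "bg_radius k (\<sigma> * q) = \<sigma> * bg_radius k q" and sign_cancel: "\<sigma> * (\<sigma> * q) = q"
    if "\<sigma> \<in> {1, -1}" for \<sigma> q :: real
    using that by (auto simp: bg_radius_minus)
  show ?thesis
  proof
    assume "\<exists>C. \<forall>s\<in>J. s * bg_radius k (p s) = C"
    then obtain C where C: "\<And>s. s \<in> J \<Longrightarrow> s * bg_radius k (p s) = C" by blast
    obtain s0 where "s0 \<in> J" using J(1) by blast
    then have "C \<noteq> 0" using C[of s0] J(2) p by (auto simp: bg_radius_eq_0_iff)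
    define \<sigma> where "\<sigma> = sgn C"
    have \<sigma>: "\<sigma> \<in> {1, -1}" using \<open>C \<noteq> 0\<close> by (simp add: \<sigma>_def sgn_if)
    have "\<bar>C\<bar> < s \<and> p s = \<sigma> * catenoid_slope k \<bar>C\<bar> s" if s: "s \<in> J" for s
    proof -
      have "s * bg_radius k (\<sigma> * p s) = \<sigma> * C"
        unfolding signed[OF \<sigma>] C[OF s, symmetric] by (simp add: algebra_simps)
      also have "\<sigma> * C = \<bar>C\<bar>" by (simp add: \<sigma>_def abs_sgn)
      finally have "\<bar>C\<bar> < s \<and> \<sigma> * p s = catenoid_slope k \<bar>C\<bar> s"
        using times_bg_radius_eq_iff[of s "\<bar>C\<bar>" k "\<sigma> * p s"] s J(2) \<open>C \<noteq> 0\<close> by auto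
      then show ?thesis using sign_cancel[OF \<sigma>, of "p s"] by metis
    qed
    then show "\<exists>c>0. \<exists>\<sigma>\<in>{1, -1::real}. J \<subseteq> {c<..} \<and> (\<forall>s\<in>J. p s = \<sigma> * catenoid_slope k c s)"
      using \<sigma> \<open>C \<noteq> 0\<close> by (intro exI[of _ "\<bar>C\<bar>"]) auto
  next
    assume "\<exists>c>0. \<exists>\<sigma>\<in>{1, -1::real}. J \<subseteq> {c<..} \<and> (\<forall>s\<in>J. p s = \<sigma> * catenoid_slope k c s)"
    then obtain c \<sigma> where c: "c > 0" "J \<subseteq> {c<..}" and \<sigma>: "\<sigma> \<in> {1, -1}"
      and slope: "\<And>s. s \<in> J \<Longrightarrow> p s = \<sigma> * catenoid_slope k c s" by blast
    have "s * bg_radius k (p s) = \<sigma> * c" if s: "s \<in> J" for s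
    proof -
      have "s * bg_radius k (catenoid_slope k c s) = c"
        using s c J(2) by (intro radius_catenoid_slope) auto
      then show ?thesis unfolding slope[OF s] signed[OF \<sigma>] by (simp add: algebra_simps)
    qed
    then show "\<exists>C. \<forall>s\<in>J. s * bg_radius k (p s) = C" by blast
  qed
qed

lemma inverse_powr_power_diff_le:
  fixes c x \<beta> :: real and M :: nat
  assumes c: "0 < c" "c < x" and M: "M > 0" and \<beta>: "0 \<le> \<beta>"
  shows "1 / (x ^ M - c ^ M) powr \<beta> \<le> (x - c) powr (- \<beta>) / (c ^ (M - 1)) powr \<beta>"
proof -
  have "x ^ M = x * x ^ (M - 1)" "c ^ M = c * c ^ (M - 1)" using M by (auto simp: power_eq_if)
  moreover have "c ^ (M - 1) \<le> x ^ (M - 1)" using c by (intro power_mono) auto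
  ultimately have low: "(x - c) * c ^ (M - 1) \<le> x ^ M - c ^ M" using c by (simp add: algebra_simps)
  have low_pos: "(x - c) * c ^ (M - 1) > 0" using c by simp
  then have "((x - c) * c ^ (M - 1)) powr \<beta> \<le> (x ^ M - c ^ M) powr \<beta>"
    using low \<beta> by (intro powr_mono2) auto
  then have "1 / (x ^ M - c ^ M) powr \<beta> \<le> 1 / ((x - c) * c ^ (M - 1)) powr \<beta>"
    using low low_pos c by (intro divide_left_mono mult_pos_pos) auto
  also have "\<dots> = (x - c) powr (- \<beta>) / (c ^ (M - 1)) powr \<beta>"
    using c by (simp add: powr_mult powr_minus divide_inverse)
  finally show ?thesis .
qed

lemma integrable_inverse_powr_power_diff:
  fixes c b \<beta> :: real and M :: nat
  assumes c: "c > 0" and M: "M > 0" and \<beta>: "0 \<le> \<beta>" "\<beta> < 1"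
  shows "(\<lambda>\<rho>. 1 / (\<rho> ^ M - c ^ M) powr \<beta>) integrable_on {c..b}"
proof (cases "c < b")
  case False
  then have "{c..b} = {} \<or> {c..b} = cbox c c" by auto
  then show ?thesis by (metis integrable_on_empty integrable_on_refl)
next
  case True
  define g where "g = (\<lambda>\<rho>::real. 1 / (\<rho> ^ M - c ^ M) powr \<beta>)"
  define h where "h = (\<lambda>x::real. (x - c) powr (- \<beta>) / (c ^ (M - 1)) powr \<beta>)"
  have "((\<lambda>x. x powr (- \<beta>)) has_integral ((b - c) powr (- \<beta> + 1) / (- \<beta> + 1))) {0..b - c}"
    using \<beta> True by (intro has_integral_powr_from_0) auto
  then have "(((\<lambda>x. (x - c) powr (- \<beta>)) \<circ> (+) c) has_integral ((b - c) powr (- \<beta> + 1) / (- \<beta> + 1)))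
      {0..b - c}"
    by (simp add: o_def)
  then have "((\<lambda>x. (x - c) powr (- \<beta>)) has_integral ((b - c) powr (- \<beta> + 1) / (- \<beta> + 1))) {c..b}"
    unfolding has_integral_shift_Icc_real by simp
  then have "h integrable_on {c..b}"
    unfolding h_def integrable_on_def using has_integral_divide by blast
  then have h: "h integrable_on {c<..<b}" using integrable_on_Icc_iff_Ioo by blast
  have pos: "x ^ M - c ^ M > 0" if "x > c" for x
    using that c M by (simp add: power_strict_mono)
  have "continuous_on {c<..<b} g"
    unfolding g_def by (intro continuous_intros ballI) (use pos in force)+
  then have meas: "g \<in> borel_measurable (lebesgue_on {c<..<b})"
    by (rule continuous_imp_measurable_on_sets_lebesgue) auto
  have "\<bar>g x\<bar> \<le> h x" if "x \<in> {c<..<b}" for x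
    using inverse_powr_power_diff_le[OF c _ M \<beta>(1), of x] that by (simp add: g_def h_def)
  then have "g integrable_on {c<..<b}"
    by (intro measurable_bounded_by_integrable_imp_integrable_real[OF meas h]) auto
  then show ?thesis using integrable_on_Icc_iff_Ioo unfolding g_def by blast
qed

lemma integral_has_real_derivative_interior:
  fixes g :: "real \<Rightarrow> real"
  assumes "\<And>b. g integrable_on {c..b}" and "c < x" and "isCont g x"
  shows "((\<lambda>y. integral {c..y} g) has_real_derivative g x) (at x)"
proof -
  have "x \<in> interior {c..x + 1}" using assms(2) by simp
  from at_within_interior[OF this] have at_x: "at x within ({c..x + 1} - {}) = at x" by simp
  have cont: "continuous (at x within ({c..x + 1} - {})) g"
    using assms(3) by (rule continuous_at_imp_continuous_at_within)
  have "((\<lambda>y. integral {c..y} g) has_vector_derivative g x) (at x within ({c..x + 1} - {}))"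
    by (rule integral_has_vector_derivative_continuous_at[OF assms(1) _ _ cont]) (use assms(2) in auto)
  then show ?thesis unfolding has_real_derivative_iff_has_vector_derivative at_x .
qed

lemma integral_catenoid_slope_has_real_derivative:
  assumes "0 < c" "c < s"
  shows "((\<lambda>x. integral {c..x} (catenoid_slope k c)) has_real_derivative catenoid_slope k c s) (at s)"
proof (rule integral_has_real_derivative_interior[OF _ assms(2)])
  fix b
  have "(\<lambda>\<rho>. 1 / (\<rho> ^ (2*k+2) - c ^ (2*k+2)) powr (real (2*k+1) / real (2*k+2)))
      integrable_on {c..b}"
    by (rule integrable_inverse_powr_power_diff) (use assms in auto)
  then have "(\<lambda>\<rho>. 1 / (\<rho> ^ (2*k+2) - c ^ (2*k+2)) powr (real (2*k+1) / real (2*k+2)) * c ^ (2*k+1))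
      integrable_on {c..b}"
    by (rule integrable_on_mult_left)
  then show "catenoid_slope k c integrable_on {c..b}"
    by (simp add: catenoid_slope_def[abs_def])
next
  have "s ^ (2*k+2) - c ^ (2*k+2) > 0"
    using assms power_strict_mono[of c s "2*k+2"] by simp
  then show "isCont (catenoid_slope k c) s"
    unfolding catenoid_slope_def[abs_def] by (intro continuous_intros) simp_all
qed

lemma deriv_eq_catenoid_slope_iff:
  assumes "open J" "is_interval J" "c > 0" "J \<subseteq> {c<..}" "\<forall>x\<in>J. u differentiable (at x)"
  shows "(\<forall>s\<in>J. deriv u s = \<sigma> * catenoid_slope k c s)
    \<longleftrightarrow> (\<exists>c3. \<forall>\<alpha>\<in>J. u \<alpha> = \<sigma> * integral {c..\<alpha>} (catenoid_slope k c) + c3)"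
  using assms by (intro deriv_eq_iff_eq_antiderivative_plus_const DERIV_cmult
      integral_catenoid_slope_has_real_derivative) auto

theorem theorem4p1:
  fixes m :: nat and J :: "real set" and u :: "real \<Rightarrow> real"
  assumes "m \<ge> 2"
    and "open J" and "is_interval J" and "J \<noteq> {}" and "J \<subseteq> {0<..}"
    and "\<forall>n. \<forall>x\<in>J. ((deriv ^^ n) u) differentiable (at x)"
    and "\<forall>\<alpha>\<in>J. deriv u \<alpha> \<noteq> 0"
  shows "minimal_on m (\<lambda>\<alpha> v. vector [\<alpha> * cos v, \<alpha> * sin v, u \<alpha>]) (J \<times> UNIV)
    \<longleftrightarrow> (\<exists>c2>0. \<exists>c3. \<exists>\<sigma>\<in>{1, -1::real}. J \<subseteq> {c2<..} \<and>
          (\<forall>\<alpha>\<in>J. u \<alpha> = \<sigma> * integral {c2..\<alpha>}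
              (\<lambda>\<rho>. c2 ^ (2*m-1) / (\<rho> ^ (2*m) - c2 ^ (2*m)) powr (real (2*m-1) / real (2*m)))
              + c3))"
proof -
  obtain k where m: "m = Suc k" using assms(1) by (cases m) auto
  have slope: "(\<lambda>\<rho>. c ^ (2*m-1) / (\<rho> ^ (2*m) - c ^ (2*m)) powr (real (2*m-1) / real (2*m)))
      = catenoid_slope k c" for c
    by (simp add: m catenoid_slope_def[abs_def])
  have surface: "(\<lambda>\<alpha> v. vector [\<alpha> * cos v, \<alpha> * sin v, u \<alpha>]) = rotation_surface u"
    by (simp add: rotation_surface_def)
  have "\<forall>x\<in>J. ((deriv ^^ n) u) differentiable (at x)" for n using assms(6) by blast
  from this[of 0] this[of 1]
  have u: "\<forall>x\<in>J. u differentiable (at x)" "\<forall>x\<in>J. deriv u differentiable (at x)" by simp_all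
  have "minimal_on m (rotation_surface u) (J \<times> UNIV) \<longleftrightarrow> (\<exists>C. \<forall>s\<in>J. s * bg_radius k (deriv u s) = C)"
    unfolding m using assms(2,3,5) u assms(7) by (rule minimal_on_rotation_surface_iff)
  also have "\<dots> \<longleftrightarrow> (\<exists>c>0. \<exists>\<sigma>\<in>{1, -1::real}. J \<subseteq> {c<..} \<and> (\<forall>s\<in>J. deriv u s = \<sigma> * catenoid_slope k c s))"
    using assms(4,5,7) by (rule const_radius_iff_catenoid_slope)
  also have "\<dots> \<longleftrightarrow> (\<exists>c>0. \<exists>c3. \<exists>\<sigma>\<in>{1, -1::real}. J \<subseteq> {c<..} \<and>
      (\<forall>\<alpha>\<in>J. u \<alpha> = \<sigma> * integral {c..\<alpha>} (catenoid_slope k c) + c3))"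
    using deriv_eq_catenoid_slope_iff[OF assms(2,3) _ _ u(1)] by blast
  finally show ?thesis unfolding slope surface .
qed

end
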